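(* Let $n\ge1$. Then $x=2$ is a double zero of $\Phi_n(x)$, i.e. $\Phi_n(2)=\Phi_n'(2)=0$ and $\Phi_n''(2)\neq0$. Moreover, all zeros of $\Phi_n(x)$ other than $x=2$ are real and lie in the interval $(-2,2)$.
   Context: $U_n$ is the Chebyshev polynomial of the second kind, $U_n(\cos\theta)=\sin((n+1)\theta)/\sin\theta$, $\tilde U_n(x)=U_n(x/2)$, and $\Phi_n(x)=((n+1)x^2-6x-4n)\tilde U_n(x)+2(x+2)\tilde U_{n-1}(x)+2(x+2)$. *)

theory Defs
  imports "HOL-Computational_Algebra.Polynomial" Complex_Main
begin

text \<open>Chebyshev polynomials of the second kind, as real polynomials:
  U_0 = 1, U_1 = 2x, U_(n+2) = 2x U_(n+1) - U_n.  These are exactly the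
  polynomials with U_n(cos t) = sin((n+1)t)/sin t.\<close>
fun chebU :: "nat \<Rightarrow> real poly" where
  "chebU 0 = 1"
| "chebU (Suc 0) = [:0, 2:]"
| "chebU (Suc (Suc n)) = [:0, 2:] * chebU (Suc n) - chebU n"

definition chebU_tilde :: "nat \<Rightarrow> real poly" where
  "chebU_tilde n = pcompose (chebU n) [:0, 1/2:]"

definition Phi :: "nat \<Rightarrow> real poly" where
  "Phi n = [:- 4 * real n, -6, real n + 1:] * chebU_tilde n
           + [:4, 2:] * chebU_tilde (n - 1) + [:4, 2:]"


end

theory Submission
  imports Defs
begin

text \<open>Put \<open>x = 2 cos t\<close>.  At the nodes \<open>x\<^sub>l = 2 cos (l \<pi> / (n + 1))\<close>, \<open>1 \<le> l \<le> n\<close>, the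
  polynomial \<open>tU\<^sub>n\<close> vanishes and \<open>\<Phi>\<^sub>n(x\<^sub>l) = 2 (x\<^sub>l + 2) (1 - (-1)\<^sup>l)\<close>: \<open>\<Phi>\<^sub>n\<close> vanishes at the
  \<open>\<lfloor>n/2\<rfloor>\<close> even nodes and is positive at the \<open>\<lceil>n/2\<rceil>\<close> odd ones, while \<open>\<Phi>\<^sub>n(-2) = 16 (-1)\<^sup>n (n + 1)\<close>.
  With the double zero at \<open>2\<close> this gives \<open>\<Phi>\<^sub>n = (x - 2)\<^sup>2 D K\<close>, where \<open>D\<close> is the product of
  the linear factors of the even nodes and \<open>deg K \<le> \<lceil>n/2\<rceil>\<close>.  Since \<open>D\<close> changes sign
  exactly once between consecutive odd nodes, \<open>K\<close> alternates in sign on the odd nodes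
  followed by \<open>-2\<close>, so it has \<open>\<lceil>n/2\<rceil>\<close> zeros in \<open>(-2, 2)\<close> and no others.\<close>

lemma sign_poly_prod_linear:
  fixes a :: "nat \<Rightarrow> 'a::linordered_idom"
  assumes "j \<le> h"
    and "\<And>i. i \<in> {1..j} \<Longrightarrow> x < a i" and "\<And>i. i \<in> {j<..h} \<Longrightarrow> a i < x"
  shows "0 < (-1) ^ j * poly (\<Prod>i=1..h. [:- a i, 1:]) x"
proof -
  have split: "{1..h} = {1..j} \<union> {j<..h}"
    using assms(1) by auto
  have "(-1) ^ j * (\<Prod>i=1..j. x - a i) = (\<Prod>i=1..j. a i - x)"
    using prod_uminus[of "\<lambda>i. x - a i" "{1..j}"] by simp
  also have "\<dots> > 0"
    using assms(2) by (intro prod_pos) auto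
  finally have "0 < (-1) ^ j * (\<Prod>i=1..j. x - a i)" .
  moreover have "0 < (\<Prod>i\<in>{j<..h}. x - a i)"
    using assms(3) by (intro prod_pos) auto
  ultimately have "0 < (-1) ^ j * (\<Prod>i=1..j. x - a i) * (\<Prod>i\<in>{j<..h}. x - a i)"
    by (rule mult_pos_pos)
  then show ?thesis
    unfolding poly_prod split by (subst prod.union_disjoint) (auto simp: mult.assoc)
qed

lemma prod_linear_mult_dvd:
  fixes p q :: "'a::idom poly"
  assumes "finite I" "inj_on a I" "\<And>i. i \<in> I \<Longrightarrow> poly p (a i) = 0"
    and "\<And>i. i \<in> I \<Longrightarrow> poly q (a i) \<noteq> 0" and "q dvd p"
  shows "q * (\<Prod>i\<in>I. [:- a i, 1:]) dvd p"
  using assms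
proof (induction I rule: finite_induct)
  case empty
  then show ?case by simp
next
  case (insert i I)
  then obtain r where r: "p = q * (\<Prod>i\<in>I. [:- a i, 1:]) * r"
    by (auto elim: dvdE)
  have "poly (\<Prod>i\<in>I. [:- a i, 1:]) (a i) \<noteq> 0"
    using insert.prems(1) insert.hyps by (auto simp: poly_prod inj_on_def)
  moreover have "poly p (a i) = 0" "poly q (a i) \<noteq> 0"
    using insert.prems by auto
  ultimately have "poly r (a i) = 0"
    using r by simp
  then obtain s where "r = [:- a i, 1:] * s"
    by (auto simp: poly_eq_0_iff_dvd elim: dvdE)
  with r have "p = q * ([:- a i, 1:] * (\<Prod>i\<in>I. [:- a i, 1:])) * s"
    by (simp only: mult_ac)
  then show ?case
    by (simp add: insert.hyps)
qed

lemma linear_power2_dvd_if_double_root: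
  fixes p :: "'a::idom poly"
  assumes "poly p a = 0" "poly (pderiv p) a = 0"
  shows "[:- a, 1:] ^ 2 dvd p"
proof -
  obtain q where q: "p = [:- a, 1:] * q"
    using assms(1) by (auto simp: poly_eq_0_iff_dvd elim: dvdE)
  have "poly q a = 0"
    using assms(2) unfolding q pderiv_mult by (simp add: pderiv_pCons)
  then obtain r where "q = [:- a, 1:] * r"
    by (auto simp: poly_eq_0_iff_dvd elim: dvdE)
  with q have "p = [:- a, 1:] ^ 2 * r"
    by (simp only: power2_eq_square mult.assoc)
  then show ?thesis
    by (rule dvdI)
qed

lemma poly_pderiv2_linear_power2_mult:
  fixes q :: "'a::idom poly"
  shows "poly (pderiv (pderiv ([:- a, 1:] ^ 2 * q))) a = 2 * poly q a"
proof -
  have "pderiv [:- a, 1:] = 1"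
    by (simp add: pderiv_pCons)
  then show ?thesis
    by (simp only: power2_eq_square mult.assoc pderiv_mult pderiv_add pderiv_1 mult_1_left
        mult_1_right add_0_right mult_0_right poly_mult poly_add) simp
qed

lemma poly_map_poly_of_real:
  "poly (map_poly of_real p) (of_real x :: 'a::{comm_ring_1, real_algebra_1}) = of_real (poly p x)"
  by (induction p) (auto simp: map_poly_pCons)

lemma map_poly_of_real_mult:
  "map_poly of_real (p * q)
    = (map_poly of_real p * map_poly of_real q :: 'a::{comm_ring_1, real_algebra_1} poly)"
  by (rule poly_eqI) (simp add: coeff_map_poly coeff_mult of_real_sum)

definition real_rooted_between :: "real poly \<Rightarrow> real \<Rightarrow> real \<Rightarrow> bool" where
  "real_rooted_between p a b \<longleftrightarrow>
     (\<forall>z. poly (map_poly complex_of_real p) z = 0 \<longrightarrow> z \<in> \<real> \<and> a < Re z \<and> Re z < b)"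

lemma real_rooted_between_mult:
  "real_rooted_between p a b \<Longrightarrow> real_rooted_between q a b \<Longrightarrow> real_rooted_between (p * q) a b"
  by (simp add: real_rooted_between_def map_poly_of_real_mult)

lemma real_rooted_between_mono:
  "real_rooted_between p a b \<Longrightarrow> a' \<le> a \<Longrightarrow> b \<le> b' \<Longrightarrow> real_rooted_between p a' b'"
  by (fastforce simp: real_rooted_between_def)

lemma real_rooted_between_poly_nonzero:
  assumes "real_rooted_between p a b" "x \<notin> {a<..<b}"
  shows "poly p x \<noteq> 0"
  using assms poly_map_poly_of_real[of p x] by (force simp: real_rooted_between_def)

lemma real_rooted_betweenI:
  assumes "p \<noteq> 0" "finite T" "T \<subseteq> {a<..<b}" "\<And>t. t \<in> T \<Longrightarrow> poly p t = 0"
    and "degree p \<le> card T"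
  shows "real_rooted_between p a b"
  unfolding real_rooted_between_def
proof (intro allI impI)
  fix z
  let ?P = "map_poly complex_of_real p"
  assume root: "poly ?P z = 0"
  have "?P \<noteq> 0"
    using assms(1) by (simp add: map_poly_eq_0_iff)
  have "z \<in> complex_of_real ` T"
  proof (rule ccontr)
    assume "z \<notin> complex_of_real ` T"
    then have "Suc (card T) = card (insert z (complex_of_real ` T))"
      using assms(2) by (simp add: card_image inj_on_def)
    also have "\<dots> \<le> card {w. poly ?P w = 0}"
      using root assms(4) poly_roots_finite[OF \<open>?P \<noteq> 0\<close>]
      by (intro card_mono) (auto simp: poly_map_poly_of_real)
    also have "\<dots> \<le> degree ?P"
      using \<open>?P \<noteq> 0\<close> by (rule card_poly_roots_bound)
    finally show False
      using assms(5) by (simp add: degree_map_poly)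
  qed
  then show "z \<in> \<real> \<and> a < Re z \<and> Re z < b"
    using assms(3) by auto
qed

lemma real_rooted_between_if_signs_alternate:
  fixes p :: "real poly" and y :: "nat \<Rightarrow> real"
  assumes "degree p \<le> k" and decreasing: "\<And>j. j < k \<Longrightarrow> y (Suc j) < y j"
    and alternating: "\<And>j. j \<le> k \<Longrightarrow> 0 < (-1) ^ j * poly p (y j)"
  shows "real_rooted_between p (y k) (y 0)"
proof -
  have antimono: "y j' \<le> y j" if "j \<le> j'" "j' \<le> k" for j j'
    using that
    by (induction j' rule: dec_induct) (auto intro: order.trans[OF less_imp_le[OF decreasing]])
  have "\<exists>r. y (Suc j) < r \<and> r < y j \<and> poly p r = 0" if "j < k" for j
  proof -
    have "0 < ((-1) ^ j * poly p (y j)) * ((-1) ^ Suc j * poly p (y (Suc j)))"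
      using that by (intro mult_pos_pos alternating) simp_all
    then have "poly p (y (Suc j)) * poly p (y j) < 0"
      by (simp add: mult_ac flip: power_mult_distrib)
    then show ?thesis
      using poly_IVT[OF decreasing[OF that]] by blast
  qed
  then obtain r where r: "\<And>j. j < k \<Longrightarrow> y (Suc j) < r j \<and> r j < y j \<and> poly p (r j) = 0"
    by metis
  have r_decreasing: "r j' < r j" if "j < j'" "j' < k" for j j'
    using r[of j] r[of j'] antimono[of "Suc j" j'] that by fastforce
  have r_bounds: "y k < r j \<and> r j < y 0" if "j < k" for j
    using r[OF that] antimono[of "Suc j" k] antimono[of 0 j] that by auto
  have "inj_on r {..<k}"
    by (rule inj_onI) (metis lessThan_iff linorder_neq_iff order_less_irrefl r_decreasing)
  moreover have "r ` {..<k} \<subseteq> {y k<..<y 0}"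
    using r_bounds by auto
  moreover have "p \<noteq> 0"
    using alternating[of 0] by auto
  ultimately show ?thesis
    using r assms(1) by (intro real_rooted_betweenI[where T = "r ` {..<k}"]) (auto simp: card_image)
qed

lemma chebU_cos: "poly (chebU n) (cos t) * sin t = sin (real (Suc n) * t)"
proof (induction n rule: chebU.induct)
  case 1
  then show ?case by simp
next
  case 2
  then show ?case by (simp add: sin_double)
next
  case (3 n)
  have sum_to_product: "sin (real (Suc (Suc (Suc n))) * t) + sin (real (Suc n) * t)
      = 2 * cos t * sin (real (Suc (Suc n)) * t)"
  proof -
    have "real (Suc (Suc (Suc n))) * t = real (Suc (Suc n)) * t + t"
      and "real (Suc n) * t = real (Suc (Suc n)) * t - t"
      by (simp_all add: algebra_simps)
    then show ?thesis by (simp only: sin_add sin_diff) (simp add: algebra_simps)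
  qed
  have "poly (chebU (Suc (Suc n))) (cos t) * sin t
      = 2 * cos t * (poly (chebU (Suc n)) (cos t) * sin t) - poly (chebU n) (cos t) * sin t"
    by (simp add: algebra_simps)
  also have "\<dots> = sin (real (Suc (Suc (Suc n))) * t)"
    using 3 sum_to_product by simp
  finally show ?case .
qed

lemma poly_chebU_tilde_2cos: "poly (chebU_tilde n) (2 * cos t) = poly (chebU n) (cos t)"
  by (simp add: chebU_tilde_def poly_pcompose)

lemma poly_chebU_1: "poly (chebU n) 1 = real n + 1"
  by (induction n rule: chebU.induct) (auto simp: algebra_simps)

lemma poly_chebU_minus_1: "poly (chebU n) (-1) = (-1) ^ n * (real n + 1)"
  by (induction n rule: chebU.induct) (auto simp: algebra_simps)

lemma poly_pderiv_chebU_1: "poly (pderiv (chebU n)) 1 = real n * (real n + 1) * (real n + 2) / 3"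
  by (induction n rule: chebU.induct)
    (auto simp: algebra_simps pderiv_mult pderiv_pCons pderiv_diff pderiv_smult poly_chebU_1)

lemma degree_chebU_le: "degree (chebU n) \<le> n"
proof (induction n rule: chebU.induct)
  case (3 n)
  have "degree ([:0, 2:] * chebU (Suc n)) \<le> Suc (Suc n)"
    using degree_mult_le[of "[:0, 2:]" "chebU (Suc n)"] 3 by simp
  then show ?case
    using 3 by (simp add: degree_diff_le)
qed auto

lemma poly_chebU_tilde_2: "poly (chebU_tilde n) 2 = real n + 1"
  using poly_chebU_tilde_2cos[of n 0] by (simp add: poly_chebU_1)

lemma poly_chebU_tilde_minus_2: "poly (chebU_tilde n) (-2) = (-1) ^ n * (real n + 1)"
  using poly_chebU_tilde_2cos[of n pi] by (simp add: poly_chebU_minus_1)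

lemma poly_pderiv_chebU_tilde_2:
  "poly (pderiv (chebU_tilde n)) 2 = real n * (real n + 1) * (real n + 2) / 6"
  by (simp add: chebU_tilde_def pderiv_pcompose poly_pcompose poly_pderiv_chebU_1 pderiv_pCons)

lemma degree_Phi_le: "degree (Phi n) \<le> n + 2"
proof -
  have deg: "degree (chebU_tilde j) \<le> j" for j
    using degree_chebU_le[of j] by (simp add: chebU_tilde_def degree_pcompose)
  have "degree ([:- 4 * real n, -6, real n + 1:] * chebU_tilde n) \<le> n + 2"
    using degree_mult_le[of "[:- 4 * real n, -6, real n + 1:]" "chebU_tilde n"] deg[of n] by simp
  moreover have "degree ([:4, 2:] * chebU_tilde (n - 1)) \<le> n + 2"
    using degree_mult_le[of "[:4, 2:]" "chebU_tilde (n - 1)"] deg[of "n - 1"] by simp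
  ultimately show ?thesis
    unfolding Phi_def by (intro degree_add_le) simp_all
qed

lemma poly_Phi_2:
  assumes "n \<ge> 1"
  shows "poly (Phi n) 2 = 0"
  using assms by (simp add: Phi_def poly_chebU_tilde_2 of_nat_diff algebra_simps)

lemma poly_pderiv_Phi_2:
  assumes "n \<ge> 1"
  shows "poly (pderiv (Phi n)) 2 = 0"
proof -
  obtain j where "n = Suc j"
    using assms by (cases n) auto
  then show ?thesis
    by (simp add: Phi_def pderiv_add pderiv_mult pderiv_pCons pderiv_smult pderiv_diff
        poly_chebU_tilde_2 poly_pderiv_chebU_tilde_2 del: poly_pderiv_chebU_1)
      (simp add: field_simps)
qed

lemma poly_Phi_minus_2: "poly (Phi n) (-2) = 16 * (-1) ^ n * (real n + 1)"
  by (simp add: Phi_def poly_chebU_tilde_minus_2 algebra_simps)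

definition cheb_node :: "nat \<Rightarrow> nat \<Rightarrow> real" where
  "cheb_node n l = 2 * cos (real l * pi / real (Suc n))"

lemma cheb_node_0 [simp]: "cheb_node n 0 = 2"
  by (simp add: cheb_node_def)

lemma cheb_node_Suc_self [simp]: "cheb_node n (Suc n) = -2"
  by (simp add: cheb_node_def)

lemma cheb_node_strict_antimono:
  assumes "l < l'" "l' \<le> Suc n"
  shows "cheb_node n l' < cheb_node n l"
proof -
  have "real l' * pi \<le> real (Suc n) * pi"
    using assms by (intro mult_right_mono) auto
  then have angle_le_pi: "real l' * pi / real (Suc n) \<le> pi"
    by (simp add: pos_divide_le_eq)
  have "real l * pi / real (Suc n) < real l' * pi / real (Suc n)"
    using assms by (intro divide_strict_right_mono mult_strict_right_mono) auto
  then show ?thesis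
    unfolding cheb_node_def using angle_le_pi by (simp add: cos_mono_less_eq)
qed

lemma cheb_node_bounds:
  assumes "1 \<le> l" "l \<le> n"
  shows "-2 < cheb_node n l" "cheb_node n l < 2"
  using cheb_node_strict_antimono[of l "Suc n" n] cheb_node_strict_antimono[of 0 l n] assms
  by simp_all

text \<open>At the nodes, \<open>tU\<^sub>n\<close> vanishes and \<open>tU\<^sub>n\<^sub>-\<^sub>1 = -(-1)\<^sup>l\<close>, since
  \<open>sin (n t) = sin (l \<pi> - t)\<close> there.\<close>
lemma poly_Phi_cheb_node:
  assumes "1 \<le> l" "l \<le> n"
  shows "poly (Phi n) (cheb_node n l) = 2 * (cheb_node n l + 2) * (1 - (-1) ^ l)"
proof -
  define t where "t = real l * pi / real (Suc n)"
  obtain j where n: "n = Suc j"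
    using assms by (cases n) auto
  have "real l * pi < real (Suc n) * pi"
    using assms by (intro mult_strict_right_mono) auto
  then have "0 < t" "t < pi"
    using assms unfolding t_def by (simp_all add: pos_divide_less_eq)
  then have sin_pos: "sin t > 0"
    by (rule sin_gt_zero)
  have multiple: "real (Suc n) * t = real l * pi"
    unfolding t_def by simp
  then have "poly (chebU n) (cos t) * sin t = 0"
    using chebU_cos[of n t] by simp
  then have tU_n: "poly (chebU_tilde n) (2 * cos t) = 0"
    using sin_pos by (simp add: poly_chebU_tilde_2cos)
  have "real (Suc j) * t = real l * pi - t"
    using multiple n by (simp add: algebra_simps)
  then have "poly (chebU j) (cos t) * sin t = sin (real l * pi - t)"
    using chebU_cos[of j t] by simp
  also have "\<dots> = - ((-1) ^ l) * sin t"
    by (simp add: sin_diff)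
  finally have tU_pred: "poly (chebU_tilde j) (2 * cos t) = - ((-1) ^ l)"
    using sin_pos by (metis mult_right_cancel order_less_irrefl poly_chebU_tilde_2cos)
  have "cheb_node n l = 2 * cos t"
    by (simp add: cheb_node_def t_def)
  then show ?thesis
    unfolding Phi_def using tU_n tU_pred n by (simp add: algebra_simps)
qed

lemma inj_on_even_cheb_nodes: "inj_on (\<lambda>i. cheb_node n (2 * i)) {1..n div 2}"
proof (rule inj_onI)
  fix i i' assume "i \<in> {1..n div 2}" "i' \<in> {1..n div 2}"
    and eq: "cheb_node n (2 * i) = cheb_node n (2 * i')"
  then have "2 * i \<le> Suc n" "2 * i' \<le> Suc n"
    by auto
  then show "i = i'"
    using eq cheb_node_strict_antimono[of "2 * i" "2 * i'" n]
      cheb_node_strict_antimono[of "2 * i'" "2 * i" n] by (cases i i' rule: linorder_cases) auto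
qed

definition even_node_poly :: "nat \<Rightarrow> real poly" where
  "even_node_poly n = (\<Prod>i=1..n div 2. [:- cheb_node n (2 * i), 1:])"

lemma degree_even_node_poly: "degree (even_node_poly n) = n div 2"
  unfolding even_node_poly_def by (subst degree_prod_eq_sum_degree) auto

lemma real_rooted_between_even_node_poly: "real_rooted_between (even_node_poly n) (-2) 2"
proof (rule real_rooted_betweenI)
  let ?T = "(\<lambda>i. cheb_node n (2 * i)) ` {1..n div 2}"
  show "even_node_poly n \<noteq> 0"
    unfolding even_node_poly_def by (auto simp: prod_zero_iff)
  show "?T \<subseteq> {-2<..<2}"
    using cheb_node_bounds[of "2 * _" n] by auto
  show "poly (even_node_poly n) t = 0" if "t \<in> ?T" for t
    using that unfolding even_node_poly_def poly_prod by (auto simp: prod_zero_iff)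
  show "degree (even_node_poly n) \<le> card ?T"
    by (subst card_image[OF inj_on_even_cheb_nodes]) (simp add: degree_even_node_poly)
qed simp

definition Phi_cofactor :: "nat \<Rightarrow> real poly" where
  "Phi_cofactor n = Phi n div ([:-2, 1:] ^ 2 * even_node_poly n)"

lemma Phi_factorization:
  assumes "n \<ge> 1"
  shows "Phi n = [:-2, 1:] ^ 2 * even_node_poly n * Phi_cofactor n"
proof -
  have "[:-2, 1:] ^ 2 dvd Phi n"
    using assms by (intro linear_power2_dvd_if_double_root poly_Phi_2 poly_pderiv_Phi_2)
  then have "[:-2, 1:] ^ 2 * even_node_poly n dvd Phi n"
    unfolding even_node_poly_def
  proof (rule prod_linear_mult_dvd[OF finite_atLeastAtMost inj_on_even_cheb_nodes, rotated 2])
    fix i assume "i \<in> {1..n div 2}"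
    then have "1 \<le> 2 * i" "2 * i \<le> n"
      by auto
    then show "poly (Phi n) (cheb_node n (2 * i)) = 0"
      and "poly ([:-2, 1:] ^ 2) (cheb_node n (2 * i)) \<noteq> 0"
      using poly_Phi_cheb_node[of "2 * i" n] cheb_node_bounds[of "2 * i" n] by auto
  qed
  then show ?thesis
    by (simp add: Phi_cofactor_def)
qed

lemma Phi_nonzero: "Phi n \<noteq> 0"
  using poly_Phi_minus_2[of n] by auto

lemma degree_Phi_cofactor_le:
  assumes "n \<ge> 1"
  shows "degree (Phi_cofactor n) \<le> n - n div 2"
proof -
  have "degree (Phi n) = 2 + n div 2 + degree (Phi_cofactor n)"
    using Phi_factorization[OF assms] Phi_nonzero[of n]
    by (metis degree_even_node_poly degree_linear_power degree_mult_eq mult_eq_0_iff)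
  then show ?thesis
    using degree_Phi_le[of n] by simp
qed

text \<open>For \<open>j < n - n div 2\<close> these are the nodes of odd index, where \<open>\<Phi>\<^sub>n = 4 (x + 2) > 0\<close>;
  the last sample point is \<open>-2\<close>.\<close>
definition odd_node_sample :: "nat \<Rightarrow> nat \<Rightarrow> real" where
  "odd_node_sample n j = cheb_node n (min (2 * j + 1) (Suc n))"

lemma sign_even_node_poly_odd_sample:
  assumes "j < n - n div 2"
  shows "0 < (-1) ^ j * poly (even_node_poly n) (odd_node_sample n j)"
  unfolding even_node_poly_def
proof (rule sign_poly_prod_linear)
  have odd_index: "2 * j + 1 \<le> n"
    using assms by linarith
  show "odd_node_sample n j < cheb_node n (2 * i)" if "i \<in> {1..j}" for i
    using that odd_index by (auto simp: odd_node_sample_def intro!: cheb_node_strict_antimono)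
  show "cheb_node n (2 * i) < odd_node_sample n j" if "i \<in> {j<..n div 2}" for i
    using that odd_index by (auto simp: odd_node_sample_def intro!: cheb_node_strict_antimono)
qed (use assms in linarith)

lemma sign_even_node_poly_minus_2: "0 < (-1) ^ (n div 2) * poly (even_node_poly n) (-2)"
  unfolding even_node_poly_def
  by (rule sign_poly_prod_linear) (auto intro: cheb_node_bounds)

lemma Phi_cofactor_signs_alternate:
  assumes "n \<ge> 1" "j \<le> n - n div 2"
  shows "0 < (-1) ^ j * poly (Phi_cofactor n) (odd_node_sample n j)"
proof (cases "j < n - n div 2")
  case True
  let ?x = "odd_node_sample n j"
  have "2 * j + 1 \<le> n"
    using True by linarith
  then have Phi_pos: "0 < poly (Phi n) ?x" and "?x < 2"
    using poly_Phi_cheb_node[of "2 * j + 1" n] cheb_node_bounds[of "2 * j + 1" n]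
    by (simp_all add: odd_node_sample_def)
  then have "0 < (?x - 2) ^ 2"
    by simp
  then have "0 < (?x - 2) ^ 2 * ((-1) ^ j * poly (even_node_poly n) ?x)"
    using sign_even_node_poly_odd_sample[OF True] by (rule mult_pos_pos)
  moreover have "poly (Phi n) ?x = ((?x - 2) ^ 2 * ((-1) ^ j * poly (even_node_poly n) ?x))
      * ((-1) ^ j * poly (Phi_cofactor n) ?x)"
    by (subst Phi_factorization[OF assms(1)]) (simp add: algebra_simps flip: power_mult_distrib)
  ultimately show ?thesis
    using Phi_pos by (metis zero_less_mult_pos)
next
  case False
  with assms(2) have j: "j = n - n div 2" "odd_node_sample n j = -2"
    by (simp_all add: odd_node_sample_def)
  have "0 < 16 * (real n + 1)"
    by simp
  also have "\<dots> = (-1) ^ n * poly (Phi n) (-2)"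
    by (cases "even n") (simp_all add: poly_Phi_minus_2)
  also have "\<dots> = 16 * ((-1) ^ (n div 2) * poly (even_node_poly n) (-2))
      * ((-1) ^ j * poly (Phi_cofactor n) (-2))"
  proof -
    have "(-1) ^ n = ((-1) ^ (n div 2) * (-1) ^ j :: real)"
      using j(1) by (simp flip: power_add)
    then show ?thesis
      by (subst Phi_factorization[OF assms(1)]) (simp add: algebra_simps)
  qed
  finally show ?thesis
    unfolding j(2) by (rule zero_less_mult_pos) (simp add: sign_even_node_poly_minus_2)
qed

lemma real_rooted_between_Phi_cofactor:
  assumes "n \<ge> 1"
  shows "real_rooted_between (Phi_cofactor n) (-2) 2"
proof -
  have "odd_node_sample n (Suc j) < odd_node_sample n j" if "j < n - n div 2" for j
    using that unfolding odd_node_sample_def by (intro cheb_node_strict_antimono) auto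
  then have "real_rooted_between (Phi_cofactor n)
      (odd_node_sample n (n - n div 2)) (odd_node_sample n 0)"
    using assms by (intro real_rooted_between_if_signs_alternate degree_Phi_cofactor_le
        Phi_cofactor_signs_alternate)
  moreover have "odd_node_sample n (n - n div 2) = -2" "odd_node_sample n 0 \<le> 2"
    using cheb_node_bounds[of 1 n] assms by (simp_all add: odd_node_sample_def)
  ultimately show ?thesis
    by (auto elim: real_rooted_between_mono)
qed

theorem propositionB5:
  fixes n :: nat
  assumes "n \<ge> 1"
  shows "poly (Phi n) 2 = 0 \<and> poly (pderiv (Phi n)) 2 = 0
         \<and> poly (pderiv (pderiv (Phi n))) 2 \<noteq> 0
         \<and> (\<forall>z::complex. poly (map_poly complex_of_real (Phi n)) z = 0 \<and> z \<noteq> 2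
               \<longrightarrow> z \<in> \<real> \<and> -2 < Re z \<and> Re z < 2)"
proof -
  let ?Q = "even_node_poly n * Phi_cofactor n"
  have Phi: "Phi n = [:-2, 1:] ^ 2 * ?Q"
    using Phi_factorization[OF assms] by (simp only: mult.assoc)
  have Q: "real_rooted_between ?Q (-2) 2"
    using assms by (intro real_rooted_between_mult real_rooted_between_even_node_poly
        real_rooted_between_Phi_cofactor)
  have "poly (pderiv (pderiv (Phi n))) 2 = 2 * poly ?Q 2"
    by (subst Phi) (rule poly_pderiv2_linear_power2_mult)
  moreover have "poly ?Q 2 \<noteq> 0"
    using Q by (rule real_rooted_between_poly_nonzero) simp
  moreover have "poly (map_poly complex_of_real (Phi n)) z
      = (z - 2) ^ 2 * poly (map_poly complex_of_real ?Q) z" for z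
    unfolding Phi map_poly_of_real_mult
    by (simp add: power2_eq_square map_poly_of_real_mult map_poly_pCons algebra_simps)
  ultimately show ?thesis
    using Q assms poly_Phi_2 poly_pderiv_Phi_2 by (auto simp: real_rooted_between_def)
qed

end
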